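(* Let $(\mathbf x,\mathbf p,\mu)$ be a deterministic TFM satisfying weak UIC and $2$-weak-SCP. Let $\mathbf b=(b_1,\dots,b_m)$ be a bid vector and $i$ a user with $x_i(\mathbf b)=1$, and let $\mathbf b'=(\mathbf b_{-i},b_i')$ be such that $x_i(\mathbf b')=1$. Then (1) $\mu(\mathbf b)=\mu(\mathbf b')$; and (2) for every user $j$ with $x_j(\mathbf b)=1$ and $b_j>p_j(\mathbf b)$, we have $x_j(\mathbf b')=1$ and $p_j(\mathbf b')=p_j(\mathbf b)$.
   Context: Setting (TFM). Each user $i$ has a true value $v_i\ge0$ and submits a single bid $b_i\ge0$; $\mathbf b=(b_1,\dots,b_m)$, $\mathbf b_{-i}$ the other bids. A TFM has an inclusion rule (run by the miner, choosing at most $B$ bids, $B$ finite or infinite) and confirmation, payment, miner-revenue rules (run by the blockchain on included bids); the mechanism treats users symmetrically. Composing the honest inclusion rule with the others gives deterministic $(\mathbf x,\mathbf p,\mu)$: $x_i(\mathbf b)\in\{0,1\}$ indicates confirmation, $p_i(\mathbf b)\le b_i$ the payment ($0$ if unconfirmed), $\mu(\mathbf b)$ the miner revenue (at most total payment). Strategic players (a user, the miner, or the miner with some users) may bid untruthfully after seeing all bids, inject fake bids (true value $0$), and (if the miner is involved) include any at most $B$ available bids. Weak ($1$-strict) utility: miner revenue (if the miner is in the player) plus $v-p$ for each confirmed transaction of the player (true value $v$, payment $p$), minus $(b-v)$ for each unconfirmed transaction of the player with bid $b>v$. Weak UIC: with an honest miner, each user's weak utility is maximized by truthful bidding without fake bids,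 whatever the other bids. $c$-weak-SCP: for every coalition of the miner with between $1$ and $c$ users, joint weak utility is maximized by truthful bidding and honest miner behavior, whatever the other bids. *)

theory Defs
  imports Main "HOL-Library.Extended_Nat"
begin

text \<open>The honest inclusion rule picks a set of indices of the posted bid list
  (at most the block size, which may be infinite).  The blockchain rules
  (confirmation, payment, miner revenue) act on the list of included bids
  (kept in posting order); a transaction is referred to by its position in
  that list.\<close>
record tfm =
  incl :: "real list \<Rightarrow> nat set"
  cap  :: enat
  tconf :: "real list \<Rightarrow> nat \<Rightarrow> bool"
  tpay  :: "real list \<Rightarrow> nat \<Rightarrow> real"
  trev  :: "real list \<Rightarrow> real"

definition nonneg :: "real list \<Rightarrow> bool" where
  "nonneg bs \<longleftrightarrow> (\<forall>x\<in>set bs. 0 \<le> x)"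

definition pos :: "nat set \<Rightarrow> nat \<Rightarrow> nat" where
  "pos S k = card {j\<in>S. j < k}"

definition confirmed :: "tfm \<Rightarrow> real list \<Rightarrow> nat set \<Rightarrow> nat \<Rightarrow> bool" where
  "confirmed M bs S k \<longleftrightarrow> k \<in> S \<and> tconf M (nths bs S) (pos S k)"

definition payment :: "tfm \<Rightarrow> real list \<Rightarrow> nat set \<Rightarrow> nat \<Rightarrow> real" where
  "payment M bs S k = (if confirmed M bs S k then tpay M (nths bs S) (pos S k) else 0)"

definition revenue :: "tfm \<Rightarrow> real list \<Rightarrow> nat set \<Rightarrow> real" where
  "revenue M bs S = trev M (nths bs S)"

definition x :: "tfm \<Rightarrow> real list \<Rightarrow> nat \<Rightarrow> bool" where
  "x M b i = confirmed M b (incl M b) i"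

definition p :: "tfm \<Rightarrow> real list \<Rightarrow> nat \<Rightarrow> real" where
  "p M b i = payment M b (incl M b) i"

definition mu :: "tfm \<Rightarrow> real list \<Rightarrow> real" where
  "mu M b = revenue M b (incl M b)"

definition tfm_ok :: "tfm \<Rightarrow> bool" where
  "tfm_ok M \<longleftrightarrow> (\<forall>b. nonneg b \<longrightarrow>
      incl M b \<subseteq> {..<length b} \<and> enat (card (incl M b)) \<le> cap M \<and>
      (\<forall>i<length b. p M b i \<le> b ! i) \<and>
      mu M b \<le> (\<Sum>i<length b. p M b i))"

definition tx_util :: "tfm \<Rightarrow> real list \<Rightarrow> nat set \<Rightarrow> nat \<Rightarrow> real \<Rightarrow> real" where
  "tx_util M bs S k v =
     (if confirmed M bs S k then v - payment M bs S k else - max 0 (bs ! k - v))"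

text \<open>Joint weak utility of a strategic player: (optionally) the miner, the
  real users in C (true values v), and all fake bids, which are the posted
  bids at positions m, m+1, ... (m = number of real users), with true value 0.\<close>
definition coal_util ::
  "tfm \<Rightarrow> bool \<Rightarrow> nat set \<Rightarrow> (nat \<Rightarrow> real) \<Rightarrow> nat \<Rightarrow> real list \<Rightarrow> nat set \<Rightarrow> real" where
  "coal_util M miner C v m bs S =
     (if miner then revenue M bs S else 0)
     + (\<Sum>k\<in>C. tx_util M bs S k (v k))
     + (\<Sum>k\<in>{m..<length bs}. tx_util M bs S k 0)"

definition dev :: "real list \<Rightarrow> nat set \<Rightarrow> (nat \<Rightarrow> real) \<Rightarrow> real list \<Rightarrow> real list" where
  "dev b C r F = map (\<lambda>k. if k \<in> C then r k else b ! k) [0..<length b] @ F"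

definition weak_UIC :: "tfm \<Rightarrow> bool" where
  "weak_UIC M \<longleftrightarrow> (\<forall>b i v r F.
     nonneg b \<and> i < length b \<and> 0 \<le> v \<and> 0 \<le> r \<and> nonneg F \<longrightarrow>
     coal_util M False {i} (\<lambda>_. v) (length b) (dev b {i} (\<lambda>_. r) F)
        (incl M (dev b {i} (\<lambda>_. r) F))
     \<le> coal_util M False {i} (\<lambda>_. v) (length b) (dev b {i} (\<lambda>_. v) [])
        (incl M (dev b {i} (\<lambda>_. v) [])))"

definition weak_SCP :: "tfm \<Rightarrow> nat \<Rightarrow> bool" where
  "weak_SCP M c \<longleftrightarrow> (\<forall>b C v r F S.
     nonneg b \<and> C \<subseteq> {..<length b} \<and> 1 \<le> card C \<and> card C \<le> c \<and>
     (\<forall>k\<in>C. 0 \<le> v k \<and> 0 \<le> r k) \<and> nonneg F \<and>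
     S \<subseteq> {..<length (dev b C r F)} \<and> enat (card S) \<le> cap M \<longrightarrow>
     coal_util M True C v (length b) (dev b C r F) S
     \<le> coal_util M True C v (length b) (dev b C v []) (incl M (dev b C v [])))"

end

theory Submission
  imports Defs
begin

text \<open>Every claim comes from applying an incentive condition twice: the coalition's true
  values are the bids of one vector and its deviation is the other vector, and then the roles
  are swapped.  Weak UIC for user i makes i's payment independent of i's bid; 1-weak-SCP for
  the miner with i then makes the revenue independent of it too; and 2-weak-SCP for the miner
  with i and j forces j's utility to stay b_j - p_j > 0, which an unconfirmed j (utility 0)
  cannot attain, so j stays confirmed at the same price.\<close>

definition user_util :: "tfm \<Rightarrow> real list \<Rightarrow> nat \<Rightarrow> real \<Rightarrow> real" where
  "user_util M c k v = (if x M c k then v - p M c k else - max 0 (c ! k - v))"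

lemma coal_util_honest:
  "coal_util M miner C v (length c) c (incl M c) =
     (if miner then mu M c else 0) + (\<Sum>k\<in>C. user_util M c k (v k))"
  unfolding coal_util_def tx_util_def user_util_def x_def p_def mu_def by simp

lemma dev_eq:
  assumes "length c = length b" and "\<forall>k<length b. c ! k = (if k \<in> C then r k else b ! k)"
  shows "dev b C r [] = c"
  using assms by (intro nth_equalityI) (auto simp: dev_def)

lemma nonneg_list_update: "nonneg b \<Longrightarrow> 0 \<le> y \<Longrightarrow> nonneg (b[i := y])"
  unfolding nonneg_def using set_update_subset_insert by fastforce

lemma weak_UIC_rebid:
  assumes "weak_UIC M" and "nonneg b" and "nonneg b'" and "length b' = length b"
    and "i < length b" and "\<forall>k. k \<noteq> i \<longrightarrow> b' ! k = b ! k"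
  shows "user_util M b' i (b ! i) \<le> user_util M b i (b ! i)"
proof -
  have "0 \<le> b ! i" "0 \<le> b' ! i"
    using assms(2-5) by (auto simp: nonneg_def)
  then have "coal_util M False {i} (\<lambda>_. b ! i) (length b) (dev b {i} (\<lambda>_. b' ! i) [])
        (incl M (dev b {i} (\<lambda>_. b' ! i) []))
     \<le> coal_util M False {i} (\<lambda>_. b ! i) (length b) (dev b {i} (\<lambda>_. b ! i) [])
        (incl M (dev b {i} (\<lambda>_. b ! i) []))"
    using weak_UIC_def[THEN iffD1, OF assms(1), rule_format, of b i "b ! i" "b' ! i" "[]"]
      assms(2,5) by (simp add: nonneg_def)
  moreover have "dev b {i} (\<lambda>_. b' ! i) [] = b'" "dev b {i} (\<lambda>_. b ! i) [] = b"
    using assms(4,6) by (auto intro: dev_eq)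
  ultimately show ?thesis
    using assms(4) by (simp add: coal_util_honest[of M False "{i}" _ b', simplified assms(4)]
        coal_util_honest[of M False "{i}" _ b])
qed

lemma weak_SCP_rebid:
  assumes "weak_SCP M c" and "tfm_ok M" and "nonneg b" and "nonneg b'"
    and "length b' = length b" and "C \<subseteq> {..<length b}" and "1 \<le> card C" and "card C \<le> c"
    and "\<forall>k. k \<notin> C \<longrightarrow> b' ! k = b ! k"
  shows "mu M b' + (\<Sum>k\<in>C. user_util M b' k (b ! k)) \<le> mu M b + (\<Sum>k\<in>C. user_util M b k (b ! k))"
proof -
  have dev: "dev b C (nth b') [] = b'" "dev b C (nth b) [] = b"
    using assms(5,9) by (auto intro: dev_eq)
  have "incl M b' \<subseteq> {..<length b'}" "enat (card (incl M b')) \<le> cap M"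
    using assms(2,4) unfolding tfm_ok_def by auto
  moreover have "\<forall>k\<in>C. 0 \<le> b ! k \<and> 0 \<le> b' ! k"
    using assms(3-6) by (auto simp: nonneg_def)
  ultimately have "coal_util M True C (nth b) (length b) (dev b C (nth b') []) (incl M b')
     \<le> coal_util M True C (nth b) (length b) (dev b C (nth b) []) (incl M (dev b C (nth b) []))"
    using weak_SCP_def[THEN iffD1, OF assms(1), rule_format,
        of b C "nth b" "nth b'" "[]" "incl M b'"] assms(3,5-8) by (simp add: dev nonneg_def)
  then show ?thesis
    using assms(5) by (simp add: dev coal_util_honest[of M True C _ b', simplified assms(5)]
        coal_util_honest[of M True C _ b])
qed

lemma confirmed_payment_indep:
  assumes "weak_UIC M" and "nonneg b" and "nonneg b'" and "length b' = length b"
    and "i < length b" and "\<forall>k. k \<noteq> i \<longrightarrow> b' ! k = b ! k"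
    and "x M b i" and "x M b' i"
  shows "p M b' i = p M b i"
proof -
  have "\<forall>k. k \<noteq> i \<longrightarrow> b ! k = b' ! k"
    using assms(6) by simp
  then have "user_util M b i (b' ! i) \<le> user_util M b' i (b' ! i)"
    using weak_UIC_rebid[OF assms(1,3,2) assms(4)[symmetric]] assms(4,5) by simp
  moreover have "user_util M b' i (b ! i) \<le> user_util M b i (b ! i)"
    using weak_UIC_rebid[OF assms(1-6)] .
  ultimately show ?thesis
    using assms(7,8) by (simp add: user_util_def)
qed

lemma confirmed_revenue_indep:
  assumes "weak_UIC M" and "weak_SCP M c" and "1 \<le> c" and "tfm_ok M"
    and "nonneg b" and "nonneg b'" and "length b' = length b"
    and "i < length b" and "\<forall>k. k \<noteq> i \<longrightarrow> b' ! k = b ! k"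
    and "x M b i" and "x M b' i"
  shows "mu M b' = mu M b"
proof -
  have "mu M b' + user_util M b' i (b ! i) \<le> mu M b + user_util M b i (b ! i)"
    using weak_SCP_rebid[OF assms(2,4-7), of "{i}"] assms(3,8,9) by simp
  moreover have "mu M b + user_util M b i (b' ! i) \<le> mu M b' + user_util M b' i (b' ! i)"
    using weak_SCP_rebid[OF assms(2,4,6,5) assms(7)[symmetric], of "{i}"] assms(3,7-9)
    by (simp add: eq_commute)
  moreover have "p M b' i = p M b i"
    using confirmed_payment_indep[OF assms(1,5-11)] .
  ultimately show ?thesis
    using assms(10,11) by (simp add: user_util_def)
qed

lemma confirmed_others_preserved:
  assumes "weak_UIC M" and "weak_SCP M c" and "2 \<le> c" and "tfm_ok M"
    and "nonneg b" and "nonneg b'" and "length b' = length b"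
    and "i < length b" and "\<forall>k. k \<noteq> i \<longrightarrow> b' ! k = b ! k"
    and "x M b i" and "x M b' i"
    and "j < length b" and "j \<noteq> i" and "x M b j" and "p M b j < b ! j"
  shows "x M b' j \<and> p M b' j = p M b j"
proof -
  have C: "{i, j} \<subseteq> {..<length b}" "card {i, j} = 2"
    using assms(8,12,13) by auto
  have "mu M b' + user_util M b' i (b ! i) + user_util M b' j (b ! j)
      \<le> mu M b + user_util M b i (b ! i) + user_util M b j (b ! j)"
    using weak_SCP_rebid[OF assms(2,4-7) C(1)] C(2) assms(3,9,13) by (simp add: add.assoc)
  moreover have "mu M b + user_util M b i (b' ! i) + user_util M b j (b' ! j)
      \<le> mu M b' + user_util M b' i (b' ! i) + user_util M b' j (b' ! j)"
    using weak_SCP_rebid[OF assms(2,4,6,5) assms(7)[symmetric], of "{i, j}"] C assms(3,7,9,13)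
    by (simp add: add.assoc eq_commute)
  moreover have "p M b' i = p M b i"
    using confirmed_payment_indep[OF assms(1,5-11)] .
  moreover have "mu M b' = mu M b"
    using confirmed_revenue_indep[OF assms(1,2) _ assms(4-11)] assms(3) by simp
  ultimately have "user_util M b' j (b ! j) = b ! j - p M b j"
    using assms(9-11,13,14) by (simp add: user_util_def)
  then show ?thesis
    using assms(9,13,15) by (auto simp: user_util_def split: if_splits)
qed

theorem mainTheorem13:
  assumes "tfm_ok M" and "weak_UIC M" and "weak_SCP M 2"
    and "nonneg b" and "i < length b" and "x M b i"
    and "0 \<le> bi'" and "x M (b[i := bi']) i"
  shows "mu M b = mu M (b[i := bi']) \<and>
    (\<forall>j<length b. x M b j \<and> b ! j > p M b j \<longrightarrow>
        x M (b[i := bi']) j \<and> p M (b[i := bi']) j = p M b j)"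
proof -
  define b' where "b' = b[i := bi']"
  have rebid: "nonneg b'" "length b' = length b" "\<forall>k. k \<noteq> i \<longrightarrow> b' ! k = b ! k"
    using nonneg_list_update[OF assms(4,7)] by (simp_all add: b'_def)
  note facts = assms(4) rebid(1,2) assms(5) rebid(3) assms(6) assms(8)[folded b'_def]
  have "mu M b' = mu M b"
    using confirmed_revenue_indep[OF assms(2,3) _ assms(1) facts] by simp
  moreover have "x M b' j \<and> p M b' j = p M b j"
    if "j < length b" "x M b j" "p M b j < b ! j" for j
  proof (cases "j = i")
    case True
    then show ?thesis
      using confirmed_payment_indep[OF assms(2) facts] facts(7) by simp
  next
    case False
    then show ?thesis
      using confirmed_others_preserved[OF assms(2,3) _ assms(1) facts that(1) False that(2,3)]
      by simp
  qed
  ultimately show ?thesis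
    unfolding b'_def by auto
qed

end
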